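(* Let $X$ be a $d$-dimensional Minkowski space and $A\subset X$ finite. For each point $\mathbf{p}\in A\cap\mathrm{FT}(A)$, $\mathbf{p}$ is a vertex of $\operatorname{conv}(A\cap\mathrm{FT}(A))$, and the set $\left\{\frac{\mathbf{q}-\mathbf{p}}{\|\mathbf{q}-\mathbf{p}\|} : \mathbf{q}\in A\cap\mathrm{FT}(A),\ \mathbf{q}\neq\mathbf{p}\right\}$ is contained in a proper exposed face of the unit ball.
   Context: A Minkowski space is a finite-dimensional real normed space $(X,\|\cdot\|)$ with unit ball $B$. A proper exposed face of $B$ is the intersection of $B$ with a supporting hyperplane of $B$. For finite $A$, $\mathrm{FT}(A)$ is the set of minimizers of $\mathbf{x}\mapsto\sum_{\mathbf{a}\in A}\|\mathbf{x}-\mathbf{a}\|$. *)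

theory Defs
  imports "HOL-Analysis.Analysis"
begin

text \<open>A Minkowski space: a finite-dimensional real vector space (modelled by a
  euclidean_space type, used only as the underlying vector space) equipped with an
  arbitrary norm N.\<close>
definition minkowski_norm :: "('a::euclidean_space \<Rightarrow> real) \<Rightarrow> bool" where
  "minkowski_norm N \<longleftrightarrow>
     (\<forall>x. N x = 0 \<longleftrightarrow> x = 0) \<and>
     (\<forall>x y. N (x + y) \<le> N x + N y) \<and>
     (\<forall>c x. N (c *\<^sub>R x) = \<bar>c\<bar> * N x)"

definition unit_ball :: "('a::euclidean_space \<Rightarrow> real) \<Rightarrow> 'a set" where
  "unit_ball N = {x. N x \<le> 1}"

definition FT :: "('a::euclidean_space \<Rightarrow> real) \<Rightarrow> 'a set \<Rightarrow> 'a set" where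
  "FT N A = {x. \<forall>y. (\<Sum>a\<in>A. N (x - a)) \<le> (\<Sum>a\<in>A. N (y - a))}"

end

theory Submission
  imports Defs
begin

text \<open>Let T be the set of Fermat-Torricelli points of A other than p, and average the points
  of T with weights proportional to 1 / N(q - p). Comparing the sum of distances at this average
  with its minimum value, attained at p and at every point of T, shows that the unit directions
  from p to the points of T add up to a vector of norm card T. Hence a single norming functional c
  of that sum attains the value 1 at every one of these directions: they lie in the exposed face
  cut out of the unit ball by the hyperplane c = 1, and c separates p strictly from T, so p is an
  extreme point of the convex hull.\<close>

lemma minkowski_norm_zero: "minkowski_norm N \<Longrightarrow> N 0 = 0"
  unfolding minkowski_norm_def by blast

lemma minkowski_norm_scaleR: "minkowski_norm N \<Longrightarrow> N (c *\<^sub>R x) = \<bar>c\<bar> * N x"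
  unfolding minkowski_norm_def by blast

lemma minkowski_norm_triangle: "minkowski_norm N \<Longrightarrow> N (x + y) \<le> N x + N y"
  unfolding minkowski_norm_def by blast

lemma minkowski_norm_minus: "minkowski_norm N \<Longrightarrow> N (- x) = N x"
  using minkowski_norm_scaleR[of N "-1" x] by simp

lemma minkowski_norm_nonneg: "minkowski_norm N \<Longrightarrow> 0 \<le> N x"
  using minkowski_norm_triangle[of N x "- x"] minkowski_norm_zero[of N]
    minkowski_norm_minus[of N x] by simp

lemma minkowski_norm_pos: "minkowski_norm N \<Longrightarrow> x \<noteq> 0 \<Longrightarrow> 0 < N x"
  using minkowski_norm_nonneg[of N x] unfolding minkowski_norm_def by force

lemma minkowski_norm_normalize:
  "minkowski_norm N \<Longrightarrow> x \<noteq> 0 \<Longrightarrow> N ((1 / N x) *\<^sub>R x) = 1"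
  using minkowski_norm_pos[of N x] minkowski_norm_scaleR[of N "1 / N x" x] by simp

lemma minkowski_norm_sum_le:
  assumes "minkowski_norm N"
  shows "N (sum f I) \<le> (\<Sum>i\<in>I. N (f i))"
proof (cases "finite I")
  case True
  then show ?thesis
  proof (induction I rule: finite_induct)
    case (insert i I)
    then show ?case
      using minkowski_norm_triangle[OF assms, of "f i" "sum f I"] by simp
  qed (simp add: assms minkowski_norm_zero)
qed (simp add: assms minkowski_norm_zero)

lemma minkowski_norm_convex_combination_le:
  assumes m: "minkowski_norm N" and "sum u T = 1" and "\<And>q. q \<in> T \<Longrightarrow> 0 \<le> u q"
  shows "N ((\<Sum>q\<in>T. u q *\<^sub>R q) - a) \<le> (\<Sum>q\<in>T. u q * N (q - a))"
proof -
  have "(\<Sum>q\<in>T. u q *\<^sub>R q) - a = (\<Sum>q\<in>T. u q *\<^sub>R (q - a))"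
    using \<open>sum u T = 1\<close> by (simp add: scaleR_diff_right sum_subtractf flip: scaleR_sum_left)
  also have "N \<dots> \<le> (\<Sum>q\<in>T. N (u q *\<^sub>R (q - a)))"
    by (rule minkowski_norm_sum_le[OF m])
  also have "\<dots> = (\<Sum>q\<in>T. u q * N (q - a))"
    using assms by (intro sum.cong) (auto simp: minkowski_norm_scaleR)
  finally show ?thesis .
qed

lemma convex_unit_ball:
  assumes m: "minkowski_norm N"
  shows "convex (unit_ball N)"
  unfolding convex_def unit_ball_def
proof (intro allI impI ballI, simp)
  fix x y :: 'a and u v :: real
  assume h: "N x \<le> 1" "N y \<le> 1" "0 \<le> u" "0 \<le> v" "u + v = 1"
  have "N (u *\<^sub>R x + v *\<^sub>R y) \<le> u * N x + v * N y"
    using minkowski_norm_triangle[OF m, of "u *\<^sub>R x" "v *\<^sub>R y"] minkowski_norm_scaleR[OF m] h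
    by simp
  also have "\<dots> \<le> u + v"
    using h by (intro add_mono) (auto simp: mult_left_le)
  finally show "N (u *\<^sub>R x + v *\<^sub>R y) \<le> 1" using h by simp
qed

lemma inner_le_minkowski_norm:
  assumes m: "minkowski_norm N" and c: "\<And>y. y \<in> unit_ball N \<Longrightarrow> c \<bullet> y \<le> 1"
  shows "c \<bullet> x \<le> N x"
proof (cases "x = 0")
  case False
  then have "(1 / N x) *\<^sub>R x \<in> unit_ball N"
    using m by (simp add: unit_ball_def minkowski_norm_normalize)
  then have "(1 / N x) * (c \<bullet> x) \<le> 1" using c by fastforce
  then show ?thesis using minkowski_norm_pos[OF m False] by (simp add: field_simps)
qed (simp add: m minkowski_norm_zero)

lemma unit_sphere_not_in_rel_interior:
  assumes m: "minkowski_norm N" and z: "N z = 1"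
  shows "z \<notin> rel_interior (unit_ball N)"
proof
  assume "z \<in> rel_interior (unit_ball N)"
  then obtain e where e: "0 < e" and sub: "cball z e \<inter> affine hull unit_ball N \<subseteq> unit_ball N"
    by (auto simp: mem_rel_interior_cball)
  have z0: "z \<noteq> 0" using z m minkowski_norm_zero by force
  define t where "t = e / norm z"
  have t: "0 < t" using e z0 by (simp add: t_def)
  have "0 \<in> unit_ball N" "z \<in> unit_ball N"
    using m z by (auto simp: unit_ball_def minkowski_norm_zero)
  then have "(1 + t) *\<^sub>R z + (- t) *\<^sub>R 0 \<in> affine hull unit_ball N"
    by (intro mem_affine[OF affine_affine_hull]) (auto intro: hull_inc)
  moreover have "(1 + t) *\<^sub>R z \<in> cball z e"
    using z0 e by (simp add: t_def dist_norm algebra_simps)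
  ultimately have "(1 + t) *\<^sub>R z \<in> unit_ball N" using sub by auto
  then show False using t z by (simp add: unit_ball_def minkowski_norm_scaleR[OF m])
qed

text \<open>The finite-dimensional Hahn-Banach theorem: a supporting hyperplane of the unit ball at
  the boundary point w / N w, rescaled to the level 1.\<close>

lemma minkowski_norm_norming_functional:
  fixes N :: "'a::euclidean_space \<Rightarrow> real"
  assumes m: "minkowski_norm N" and "w \<noteq> 0"
  obtains c where "\<And>x. c \<bullet> x \<le> N x" and "c \<bullet> w = N w"
proof -
  define z where "z = (1 / N w) *\<^sub>R w"
  have z: "N z = 1" unfolding z_def by (rule minkowski_norm_normalize[OF m \<open>w \<noteq> 0\<close>])
  then have "z \<in> unit_ball N" by (simp add: unit_ball_def)
  then obtain b where "b \<noteq> 0" and "\<And>y. y \<in> unit_ball N \<Longrightarrow> b \<bullet> z \<le> b \<bullet> y"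
    using supporting_hyperplane_rel_boundary[OF convex_unit_ball[OF m]]
      unit_sphere_not_in_rel_interior[OF m z] by metis
  then have b0: "- b \<noteq> 0" and b: "\<And>y. y \<in> unit_ball N \<Longrightarrow> (- b) \<bullet> y \<le> (- b) \<bullet> z"
    by auto
  have "(1 / N (- b)) *\<^sub>R (- b) \<in> unit_ball N"
    using minkowski_norm_normalize[OF m b0] by (simp add: unit_ball_def)
  moreover have "0 < (- b) \<bullet> ((1 / N (- b)) *\<^sub>R (- b))"
    using b0 minkowski_norm_pos[OF m b0] by simp
  ultimately have bz: "0 < (- b) \<bullet> z" using b by fastforce
  define c where "c = (1 / ((- b) \<bullet> z)) *\<^sub>R (- b)"
  have "c \<bullet> x \<le> N x" for x
    by (rule inner_le_minkowski_norm[OF m]) (use b bz in \<open>simp add: c_def divide_simps\<close>)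
  moreover have "c \<bullet> w = N w"
    using bz minkowski_norm_pos[OF m \<open>w \<noteq> 0\<close>] by (simp add: c_def z_def field_simps)
  ultimately show thesis using that by blast
qed

lemma FT_sum_dist_eq:
  "x \<in> FT N A \<Longrightarrow> y \<in> FT N A \<Longrightarrow> (\<Sum>a\<in>A. N (x - a)) = (\<Sum>a\<in>A. N (y - a))"
  unfolding FT_def by (auto intro: antisym)

lemma FT_card_le_norm_sum_unit_directions:
  assumes m: "minkowski_norm N" and "finite A" "p \<in> A" "p \<in> FT N A"
    and "finite T" "T \<subseteq> FT N A" "p \<notin> T"
  shows "real (card T) \<le> N (\<Sum>q\<in>T. (1 / N (q - p)) *\<^sub>R (q - p))"
proof (cases "T = {}")
  case False
  define g where "g y = (\<Sum>a\<in>A. N (y - a))" for y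
  define f where "f y = (\<Sum>a\<in>A - {p}. N (y - a))" for y
  define w where "w = (\<Sum>q\<in>T. (1 / N (q - p)) *\<^sub>R (q - p))"
  define \<Lambda> where "\<Lambda> = (\<Sum>q\<in>T. 1 / N (q - p))"
  define u where "u q = (1 / N (q - p)) / \<Lambda>" for q
  define x where "x = (\<Sum>q\<in>T. u q *\<^sub>R q)"
  have Nq: "0 < N (q - p)" if "q \<in> T" for q
    using minkowski_norm_pos[OF m, of "q - p"] that \<open>p \<notin> T\<close> by auto
  have \<Lambda>: "0 < \<Lambda>"
    unfolding \<Lambda>_def using False Nq \<open>finite T\<close> by (intro sum_pos) auto
  have u_nonneg: "0 \<le> u q" if "q \<in> T" for q
    using Nq[OF that] \<Lambda> by (simp add: u_def)
  have u_sum: "sum u T = 1"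
    using \<Lambda> unfolding u_def sum_divide_distrib[symmetric] \<Lambda>_def[symmetric] by simp
  have uN: "u q * N (q - p) = 1 / \<Lambda>" if "q \<in> T" for q
    using Nq[OF that] by (simp add: u_def)
  have g_split: "g y = N (y - p) + f y" for y
    unfolding g_def f_def using \<open>finite A\<close> \<open>p \<in> A\<close> by (simp add: sum.remove)
  have gq: "g q = g p" if "q \<in> T" for q
    unfolding g_def using that \<open>T \<subseteq> FT N A\<close> \<open>p \<in> FT N A\<close> by (blast intro: FT_sum_dist_eq)
  have "x - p = (\<Sum>q\<in>T. u q *\<^sub>R (q - p))"
    using u_sum by (simp add: x_def scaleR_diff_right sum_subtractf flip: scaleR_sum_left)
  also have "\<dots> = (1 / \<Lambda>) *\<^sub>R w"
    unfolding w_def scaleR_sum_right by (intro sum.cong) (simp_all add: u_def)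
  finally have Nxp: "N (x - p) = N w / \<Lambda>"
    using \<Lambda> by (simp add: minkowski_norm_scaleR[OF m])
  have "f x \<le> (\<Sum>a\<in>A - {p}. \<Sum>q\<in>T. u q * N (q - a))"
    unfolding f_def x_def
    by (intro sum_mono minkowski_norm_convex_combination_le[OF m u_sum u_nonneg])
  also have "\<dots> = (\<Sum>q\<in>T. u q * f q)"
    by (simp add: f_def sum_distrib_left sum.swap[of _ "A - {p}"])
  also have "\<dots> = (\<Sum>q\<in>T. u q * g p - 1 / \<Lambda>)"
  proof (rule sum.cong[OF refl])
    fix q assume q: "q \<in> T"
    have "f q = g p - N (q - p)" using g_split[of q] gq[OF q] by simp
    then show "u q * f q = u q * g p - 1 / \<Lambda>" using uN[OF q] by (simp add: right_diff_distrib)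
  qed
  also have "\<dots> = g p - real (card T) / \<Lambda>"
    using u_sum by (simp add: sum_subtractf flip: sum_distrib_right)
  finally have "g x \<le> g p + (N w - real (card T)) / \<Lambda>"
    using g_split[of x] Nxp by (simp add: diff_divide_distrib)
  moreover have "g p \<le> g x"
    using \<open>p \<in> FT N A\<close> by (simp add: FT_def g_def)
  ultimately have "0 \<le> (N w - real (card T)) / \<Lambda>" by linarith
  then show ?thesis
    using \<Lambda> by (simp add: w_def zero_le_divide_iff)
qed (simp add: m minkowski_norm_zero)

lemma minkowski_norm_sum_eq_imp_common_norming_functional:
  fixes N :: "'a::euclidean_space \<Rightarrow> real" and v :: "'i \<Rightarrow> 'a"
  assumes m: "minkowski_norm N" and "finite I" and eq: "N (sum v I) = (\<Sum>i\<in>I. N (v i))"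
  obtains c w where "\<And>x. c \<bullet> x \<le> N x" and "w \<noteq> 0" and "c \<bullet> w = N w"
    and "\<And>i. i \<in> I \<Longrightarrow> c \<bullet> v i = N (v i)"
proof -
  define w :: 'a where "w = (if sum v I = 0 then SOME b. b \<in> Basis else sum v I)"
  have "(SOME b. b \<in> Basis) \<noteq> (0::'a)" by (rule nonzero_Basis[OF SOME_Basis])
  then have w: "w \<noteq> 0" and w_sum: "sum v I \<noteq> 0 \<Longrightarrow> w = sum v I"
    by (simp_all add: w_def)
  obtain c where c: "\<And>x. c \<bullet> x \<le> N x" and cw: "c \<bullet> w = N w"
    using minkowski_norm_norming_functional[OF m w] by blast
  have "c \<bullet> v i = N (v i)" if i: "i \<in> I" for i
  proof (cases "sum v I = 0")
    case True
    then have "(\<Sum>i\<in>I. N (v i)) = 0"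
      using eq minkowski_norm_zero[OF m] by simp
    then have "N (v i) = 0"
      using sum_nonneg_eq_0_iff[OF \<open>finite I\<close>, of "\<lambda>i. N (v i)"] minkowski_norm_nonneg[OF m] i
      by auto
    then have "v i = 0"
      using m unfolding minkowski_norm_def by blast
    then show ?thesis by (simp add: minkowski_norm_zero[OF m])
  next
    case False
    have "(\<Sum>i\<in>I. c \<bullet> v i) = (\<Sum>i\<in>I. N (v i))"
      using cw eq w_sum[OF False] by (simp add: inner_sum_right)
    from sum_mono_inv[OF this c i \<open>finite I\<close>] show ?thesis .
  qed
  then show thesis using that c w cw by blast
qed

lemma norming_functional_exposed_face:
  assumes m: "minkowski_norm N" and c: "\<And>x. c \<bullet> x \<le> N x" and "w \<noteq> 0" and cw: "c \<bullet> w = N w"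
  shows "unit_ball N \<inter> {x. c \<bullet> x = 1} exposed_face_of unit_ball N"
    and "unit_ball N \<inter> {x. c \<bullet> x = 1} \<noteq> {}"
    and "unit_ball N \<inter> {x. c \<bullet> x = 1} \<noteq> unit_ball N"
proof -
  show "unit_ball N \<inter> {x. c \<bullet> x = 1} exposed_face_of unit_ball N"
    by (rule exposed_face_of_Int_supporting_hyperplane_le[OF convex_unit_ball[OF m]])
       (auto simp: unit_ball_def intro: order_trans c)
  have "(1 / N w) *\<^sub>R w \<in> unit_ball N \<inter> {x. c \<bullet> x = 1}"
    using minkowski_norm_normalize[OF m \<open>w \<noteq> 0\<close>] minkowski_norm_pos[OF m \<open>w \<noteq> 0\<close>] cw
    by (simp add: unit_ball_def)
  then show "unit_ball N \<inter> {x. c \<bullet> x = 1} \<noteq> {}" by blast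
  have "0 \<in> unit_ball N" "0 \<notin> unit_ball N \<inter> {x. c \<bullet> x = 1}"
    by (simp_all add: unit_ball_def minkowski_norm_zero[OF m])
  then show "unit_ball N \<inter> {x. c \<bullet> x = 1} \<noteq> unit_ball N" by blast
qed

lemma extreme_point_of_convex_hull_insert_strict_halfspace:
  fixes p :: "'a::euclidean_space"
  assumes "finite T" and "\<And>q. q \<in> T \<Longrightarrow> c \<bullet> p < c \<bullet> q"
  shows "p extreme_point_of convex hull (insert p T)"
proof (rule extreme_point_of_convex_hull_insert[OF \<open>finite T\<close>])
  have "convex hull T \<subseteq> {x. c \<bullet> p < c \<bullet> x}"
    using assms(2) by (intro hull_minimal convex_halfspace_gt) auto
  then show "p \<notin> convex hull T" by auto
qed

theorem lemma4p14:
  fixes N :: "'a::euclidean_space \<Rightarrow> real" and A :: "'a set" and p :: 'a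
  assumes "minkowski_norm N" and "finite A" and "p \<in> A \<inter> FT N A"
  shows "p extreme_point_of (convex hull (A \<inter> FT N A)) \<and>
         (\<exists>F. F exposed_face_of unit_ball N \<and> F \<noteq> {} \<and> F \<noteq> unit_ball N \<and>
              {(1 / N (q - p)) *\<^sub>R (q - p) | q. q \<in> A \<inter> FT N A \<and> q \<noteq> p} \<subseteq> F)"
proof -
  note m = assms(1)
  define T where "T = A \<inter> FT N A - {p}"
  define u where "u q = (1 / N (q - p)) *\<^sub>R (q - p)" for q
  have T: "finite T" "insert p T = A \<inter> FT N A"
    using assms(2,3) by (auto simp: T_def)
  have Nu: "N (u q) = 1" if "q \<in> T" for q
    using minkowski_norm_normalize[OF m, of "q - p"] that by (auto simp: T_def u_def)
  have "N (sum u T) = (\<Sum>q\<in>T. N (u q))"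
  proof (rule order_antisym)
    show "(\<Sum>q\<in>T. N (u q)) \<le> N (sum u T)"
      using FT_card_le_norm_sum_unit_directions[OF m assms(2), of p T] assms(3) T Nu
      by (auto simp: T_def u_def)
  qed (rule minkowski_norm_sum_le[OF m])
  then obtain c w where c: "\<And>x. c \<bullet> x \<le> N x" and w: "w \<noteq> 0" "c \<bullet> w = N w"
    and cu: "\<And>q. q \<in> T \<Longrightarrow> c \<bullet> u q = N (u q)"
    using minkowski_norm_sum_eq_imp_common_norming_functional[OF m T(1)] by blast
  have "c \<bullet> p < c \<bullet> q" if "q \<in> T" for q
    using cu[OF that] Nu[OF that] minkowski_norm_nonneg[OF m, of "q - p"]
    by (simp add: u_def inner_diff_right zero_less_mult_iff)
  then have extreme: "p extreme_point_of convex hull (A \<inter> FT N A)"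
    unfolding T(2)[symmetric] by (rule extreme_point_of_convex_hull_insert_strict_halfspace[OF T(1)])
  have "u q \<in> unit_ball N \<inter> {x. c \<bullet> x = 1}" if "q \<in> T" for q
    using Nu[OF that] cu[OF that] by (simp add: unit_ball_def)
  then have "{(1 / N (q - p)) *\<^sub>R (q - p) | q. q \<in> A \<inter> FT N A \<and> q \<noteq> p}
      \<subseteq> unit_ball N \<inter> {x. c \<bullet> x = 1}"
    unfolding T_def u_def by blast
  with extreme show ?thesis
    using norming_functional_exposed_face[OF m c w] by blast
qed

end
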